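(* For each $1\le n<\omega$, the relation $F_n$ is a $\mathbf{\Pi}^0_{2+n}$ subset of $X_n\times X_n$.
   Context: Let $\mathbb N=\{0,1,2,\dots\}$ and identify $2^{\mathbb N}$ with $\mathcal P(\mathbb N)$. For $1\le m<\omega$ and $x\in((2^{\mathbb N})^{\mathbb N})^m$ define recursively: $A^x_1=\{x(0)(k):k\in\mathbb N\}\subseteq 2^{\mathbb N}$; for $1\le j<m$ and $l\in\mathbb N$, $a^{x,l}_1=\{x(0)(k):x(1)(l)(k)=1\}$ and $a^{x,l}_{j}=\{a^{x,k}_{j-1}:x(j)(l)(k)=1\}$ for $j\ge 2$; and $A^x_{j+1}=\{a^{x,k}_j:k\in\mathbb N\}$ for $1\le j<m$. Let $X_1=(2^{\mathbb N})^{\mathbb N}$, and for $2\le n<\omega$ let $X_n$ be the set of $x\in((2^{\mathbb N})^{\mathbb N})^n$ such that for every $1\le i<n$: (1) for every $m$ there is $k$ with $x(i)(k)(m)=1$; (2) for every $k$ there is $m$ with $x(i)(k)(m)=1$; (3) for all $k,l_1,l_2$, if $x(i-1)(l_1)=x(i-1)(l_2)$ then $x(i)(k)(l_1)=x(i)(k)(l_2)$. $X_n$ has the subspace topology of the product topology. $F_n$ on $X_n$ is $x\mathrel{F_n}y\iff A^x_n=A^y_n$. *)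

theory Defs
  imports "HOL-Analysis.Analysis" "HOL-Library.Countable_Set_Type"
begin

text \<open>Points of ((2^N)^N)^n are encoded as functions x :: nat => nat => nat => bool,
  x i k m = x(i)(k)(m), extensional (= undefined) outside i < n.\<close>

type_synonym pt = "nat \<Rightarrow> nat \<Rightarrow> nat \<Rightarrow> bool"

definition cantor_top :: "(nat \<Rightarrow> bool) topology" where
  "cantor_top = product_topology (\<lambda>m. discrete_topology (UNIV :: bool set)) UNIV"

definition seq_top :: "(nat \<Rightarrow> nat \<Rightarrow> bool) topology" where
  "seq_top = product_topology (\<lambda>k. cantor_top) UNIV"

definition power_top :: "nat \<Rightarrow> pt topology" where
  "power_top n = product_topology (\<lambda>i. seq_top) {..<n}"

definition Xset :: "nat \<Rightarrow> pt set" where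
  "Xset n = {x \<in> topspace (power_top n).
     \<forall>i. 1 \<le> i \<and> i < n \<longrightarrow>
        (\<forall>m. \<exists>k. x i k m) \<and>
        (\<forall>k. \<exists>m. x i k m) \<and>
        (\<forall>k l1 l2. x (i - 1) l1 = x (i - 1) l2 \<longrightarrow> x i k l1 = x i k l2)}"

definition Xtop :: "nat \<Rightarrow> pt topology" where
  "Xtop n = subtopology (power_top n) (Xset n)"

text \<open>Uniform type for the hereditary objects A^x_j, a^{x,l}_j: an element of 2^N
  (Leaf) or a countable set of such objects (Node). All sets occurring are countable.\<close>
datatype hobj = Leaf "nat \<Rightarrow> bool" | Node "hobj cset"

fun small_a :: "pt \<Rightarrow> nat \<Rightarrow> nat \<Rightarrow> hobj" where
  "small_a x 0 l = undefined"
| "small_a x (Suc 0) l = Node (acset ((\<lambda>k. Leaf (x 0 k)) ` {k. x 1 l k}))"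
| "small_a x (Suc (Suc j)) l = Node (acset ((\<lambda>k. small_a x (Suc j) k) ` {k. x (Suc (Suc j)) l k}))"

fun big_A :: "pt \<Rightarrow> nat \<Rightarrow> hobj set" where
  "big_A x 0 = undefined"
| "big_A x (Suc 0) = range (\<lambda>k. Leaf (x 0 k))"
| "big_A x (Suc (Suc j)) = range (small_a x (Suc j))"

definition F_rel :: "nat \<Rightarrow> (pt \<times> pt) set" where
  "F_rel n = {(x, y). x \<in> Xset n \<and> y \<in> Xset n \<and> big_A x n = big_A y n}"

text \<open>Level 0 is empty (unused).\<close>
fun borel_Sigma :: "'a topology \<Rightarrow> nat \<Rightarrow> 'a set set" where
  "borel_Sigma T 0 = {}"
| "borel_Sigma T (Suc 0) = {S. openin T S}"
| "borel_Sigma T (Suc (Suc k)) =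
     {\<Union>(range A) | A :: nat \<Rightarrow> 'a set. \<forall>j. A j \<in> {topspace T - S | S. S \<in> borel_Sigma T (Suc k)}}"

definition borel_Pi :: "'a topology \<Rightarrow> nat \<Rightarrow> 'a set set" where
  "borel_Pi T k = {topspace T - S | S. S \<in> borel_Sigma T k}"

end

theory Submission
  imports Defs
begin

(*
  For x, y in X_n whose sets A^x_i, A^y_i agree for i <= j, the equality of a^{x,k}_j and
  a^{y,l}_j is expressed by a formula of Borel rank Pi^0_{j+1}: at level 0 it is the closed
  condition x(0)(k) = y(0)(l), and a^{x,k}_{j+1} = a^{y,l}_{j+1} holds iff x(j+1)(k)(m) and
  y(j+1)(l)(m') agree for all m, m' with a^{x,m}_j = a^{y,m'}_j, one more universal
  quantifier over a Sigma formula. Equality of A^x_{j+1} and A^y_{j+1} is then a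
  forall-exists condition of rank Pi^0_{j+3}. By condition (1) on X_n, equality of A_n
  forces equality of all lower A_i, so F_n is the intersection of these conditions for
  j < n, a Pi^0_{n+2} set.
*)

section \<open>Closure properties of the finite Borel classes\<close>

lemma borel_Sigma_subset_topspace: "S \<in> borel_Sigma T q \<Longrightarrow> S \<subseteq> topspace T"
  by (induction T q rule: borel_Sigma.induct) (auto simp: openin_subset)

lemma borel_Pi_iff: "A \<in> borel_Pi T q \<longleftrightarrow> A \<subseteq> topspace T \<and> topspace T - A \<in> borel_Sigma T q"
proof
  assume "A \<in> borel_Pi T q"
  then obtain S where "A = topspace T - S" "S \<in> borel_Sigma T q"
    unfolding borel_Pi_def by blast
  then show "A \<subseteq> topspace T \<and> topspace T - A \<in> borel_Sigma T q"
    using borel_Sigma_subset_topspace by (metis Diff_subset double_diff order_refl)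
next
  assume "A \<subseteq> topspace T \<and> topspace T - A \<in> borel_Sigma T q"
  then show "A \<in> borel_Pi T q"
    unfolding borel_Pi_def by (metis (mono_tags, lifting) double_diff mem_Collect_eq order_refl)
qed

lemma borel_Sigma_Suc_Suc_iff:
  "S \<in> borel_Sigma T (Suc (Suc k)) \<longleftrightarrow> (\<exists>B :: nat \<Rightarrow> _. S = (\<Union>j. B j) \<and> (\<forall>j. B j \<in> borel_Pi T (Suc k)))"
  unfolding borel_Sigma.simps borel_Pi_def by blast

declare borel_Sigma.simps(3) [simp del]

lemma borel_Pi_Suc_Suc_iff:
  "A \<in> borel_Pi T (Suc (Suc k)) \<longleftrightarrow> (\<exists>B :: nat \<Rightarrow> _. A = (\<Inter>j. B j) \<and> (\<forall>j. B j \<in> borel_Sigma T (Suc k)))"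
    (is "_ \<longleftrightarrow> ?rhs")
proof
  assume "A \<in> borel_Pi T (Suc (Suc k))"
  then have A: "A \<subseteq> topspace T" and "topspace T - A \<in> borel_Sigma T (Suc (Suc k))"
    by (simp_all add: borel_Pi_iff)
  then obtain B :: "nat \<Rightarrow> _" where AB: "topspace T - A = (\<Union>j. B j)"
    and B: "\<And>j. B j \<in> borel_Pi T (Suc k)"
    unfolding borel_Sigma_Suc_Suc_iff by auto
  have "A = (\<Inter>j. topspace T - B j)"
    using A AB by auto
  moreover have "topspace T - B j \<in> borel_Sigma T (Suc k)" for j
    using B[of j] by (simp add: borel_Pi_iff)
  ultimately show ?rhs
    by (intro exI[of _ "\<lambda>j. topspace T - B j"]) blast
next
  assume ?rhs
  then obtain B :: "nat \<Rightarrow> _" where A: "A = (\<Inter>j. B j)" and B: "\<And>j. B j \<in> borel_Sigma T (Suc k)"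
    by auto
  have "A \<subseteq> topspace T"
    using A borel_Sigma_subset_topspace[OF B[of 0]] by auto
  moreover have "topspace T - A = (\<Union>j. topspace T - B j)"
    using A by auto
  moreover have "topspace T - B j \<in> borel_Pi T (Suc k)" for j
    using B[of j] by (auto simp: borel_Pi_def)
  ultimately have "topspace T - A \<in> borel_Sigma T (Suc (Suc k))"
    unfolding borel_Sigma_Suc_Suc_iff by (intro exI[of _ "\<lambda>j. topspace T - B j"]) blast
  with \<open>A \<subseteq> topspace T\<close> show "A \<in> borel_Pi T (Suc (Suc k))"
    by (simp add: borel_Pi_iff)
qed

lemma UN_prod_decode: "(\<Union>p. case_prod B (prod_decode p)) = (\<Union>i j. B i j)"
proof -
  have "range (case_prod B \<circ> prod_decode) = range (case_prod B)"
    by (metis image_comp surj_prod_decode)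
  then show ?thesis
    by (auto simp: o_def)
qed

lemma borel_Sigma_UN:
  fixes A :: "nat \<Rightarrow> 'a set"
  assumes "\<And>i. A i \<in> borel_Sigma T (Suc (Suc k))"
  shows "(\<Union>i. A i) \<in> borel_Sigma T (Suc (Suc k))"
proof -
  have "\<forall>i. \<exists>B :: nat \<Rightarrow> 'a set. A i = (\<Union>j. B j) \<and> (\<forall>j. B j \<in> borel_Pi T (Suc k))"
    using assms[THEN borel_Sigma_Suc_Suc_iff[THEN iffD1]] by blast
  from choice[OF this] obtain B :: "nat \<Rightarrow> nat \<Rightarrow> 'a set"
    where B: "\<forall>i. A i = (\<Union>j. B i j) \<and> (\<forall>j. B i j \<in> borel_Pi T (Suc k))"
    by blast
  have "(\<Union>i. A i) = (\<Union>p. case_prod B (prod_decode p))"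
    using B by (simp add: UN_prod_decode)
  moreover have "case_prod B (prod_decode p) \<in> borel_Pi T (Suc k)" for p
    using B by (simp split: prod.split)
  ultimately show ?thesis
    unfolding borel_Sigma_Suc_Suc_iff by blast
qed

lemma borel_Pi_INT:
  fixes A :: "nat \<Rightarrow> 'a set"
  assumes "\<And>i. A i \<in> borel_Pi T (Suc (Suc k))"
  shows "(\<Inter>i. A i) \<in> borel_Pi T (Suc (Suc k))"
proof -
  have A: "A i \<subseteq> topspace T \<and> topspace T - A i \<in> borel_Sigma T (Suc (Suc k))" for i
    using assms[of i] unfolding borel_Pi_iff .
  have "topspace T - (\<Inter>i. A i) = (\<Union>i. topspace T - A i)"
    by blast
  then have "topspace T - (\<Inter>i. A i) \<in> borel_Sigma T (Suc (Suc k))"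
    by (metis A borel_Sigma_UN)
  moreover have "(\<Inter>i. A i) \<subseteq> topspace T"
    using A by blast
  ultimately show ?thesis
    unfolding borel_Pi_iff by blast
qed

lemma borel_Sigma_UN_Pi:
  fixes A :: "nat \<Rightarrow> 'a set"
  shows "(\<And>i. A i \<in> borel_Pi T (Suc k)) \<Longrightarrow> (\<Union>i. A i) \<in> borel_Sigma T (Suc (Suc k))"
  unfolding borel_Sigma_Suc_Suc_iff by blast

lemma borel_Pi_INT_Sigma:
  fixes A :: "nat \<Rightarrow> 'a set"
  shows "(\<And>i. A i \<in> borel_Sigma T (Suc k)) \<Longrightarrow> (\<Inter>i. A i) \<in> borel_Pi T (Suc (Suc k))"
  unfolding borel_Pi_Suc_Suc_iff by blast

lemma borel_Sigma_Un:
  assumes "A \<in> borel_Sigma T (Suc k)" "B \<in> borel_Sigma T (Suc k)"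
  shows "A \<union> B \<in> borel_Sigma T (Suc k)"
proof (cases k)
  case 0
  then show ?thesis
    using assms by (simp add: openin_Un)
next
  case (Suc k')
  have "A \<union> B = (\<Union>i::nat. if i = 0 then A else B)"
    by (auto split: if_splits)
  moreover have "(\<Union>i::nat. if i = 0 then A else B) \<in> borel_Sigma T (Suc (Suc k'))"
    by (rule borel_Sigma_UN) (use assms Suc in simp)
  ultimately show ?thesis
    using Suc by simp
qed

lemma borel_Pi_Int:
  assumes "A \<in> borel_Pi T (Suc k)" "B \<in> borel_Pi T (Suc k)"
  shows "A \<inter> B \<in> borel_Pi T (Suc k)"
proof -
  have "topspace T - (A \<inter> B) = (topspace T - A) \<union> (topspace T - B)"
    by blast
  then show ?thesis
    using assms by (auto simp: borel_Pi_iff intro: borel_Sigma_Un)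
qed

lemma clopen_in_borel_Sigma_Pi:
  assumes "openin T C" "closedin T C"
  shows "C \<in> borel_Sigma T (Suc k) \<and> C \<in> borel_Pi T (Suc k)"
proof (induction k)
  case 0
  then show ?case
    using assms by (simp add: borel_Pi_iff closedin_def)
next
  case (Suc k)
  have "C = (\<Union>i::nat. C)" "C = (\<Inter>i::nat. C)"
    by simp_all
  then show ?case
    using Suc borel_Sigma_UN_Pi[of "\<lambda>_. C"] borel_Pi_INT_Sigma[of "\<lambda>_. C"] by simp
qed

lemma INT_clopen_in_borel_Pi:
  fixes C :: "nat \<Rightarrow> 'a set"
  assumes "\<And>i. openin T (C i) \<and> closedin T (C i)"
  shows "(\<Inter>i. C i) \<in> borel_Pi T (Suc k)"
proof (cases k)
  case 0
  have "closedin T (\<Inter>i. C i)"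
    using assms by (intro closedin_Inter) auto
  then show ?thesis
    using 0 by (simp add: borel_Pi_iff closedin_def)
next
  case (Suc k')
  have "(\<Inter>i. C i) \<in> borel_Pi T (Suc (Suc k'))"
    by (rule borel_Pi_INT_Sigma) (use assms clopen_in_borel_Sigma_Pi in blast)
  then show ?thesis
    using Suc by simp
qed

abbreviation Xtop2 :: "nat \<Rightarrow> (pt \<times> pt) topology" where
  "Xtop2 n \<equiv> prod_topology (Xtop n) (Xtop n)"

lemma topspace_Xtop [simp]: "topspace (Xtop n) = Xset n"
  unfolding Xtop_def Xset_def by auto

lemma continuous_map_Xtop_coordinate:
  assumes "i < n"
  shows "continuous_map (Xtop n) (discrete_topology UNIV) (\<lambda>x. x i k m)"
proof -
  have "continuous_map (power_top n) seq_top (\<lambda>x. x i)"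
    unfolding power_top_def using assms by (intro continuous_map_product_projection) auto
  moreover have "continuous_map seq_top cantor_top (\<lambda>s. s k)"
    unfolding seq_top_def by (intro continuous_map_product_projection) auto
  moreover have "continuous_map cantor_top (discrete_topology UNIV) (\<lambda>c. c m)"
    unfolding cantor_top_def by (intro continuous_map_product_projection) auto
  ultimately have "continuous_map (power_top n) (discrete_topology UNIV) ((\<lambda>c. c m) \<circ> (\<lambda>s. s k) \<circ> (\<lambda>x. x i))"
    by (intro continuous_map_compose)
  then show ?thesis
    unfolding Xtop_def o_def by (rule continuous_map_from_subtopology)
qed

lemma clopen_coordinate_eq:
  assumes "i < n"
  shows "openin (Xtop2 n) {(x, y). x \<in> Xset n \<and> y \<in> Xset n \<and> x i k m = y i l m'} \<and>
    closedin (Xtop2 n) {(x, y). x \<in> Xset n \<and> y \<in> Xset n \<and> x i k m = y i l m'}"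
    (is "openin _ ?E \<and> closedin _ ?E")
proof -
  have "continuous_map (Xtop2 n) (discrete_topology UNIV) (\<lambda>z. fst z i k m)"
    using continuous_map_compose[OF continuous_map_fst continuous_map_Xtop_coordinate[OF assms]]
    by (simp add: o_def)
  moreover have "continuous_map (Xtop2 n) (discrete_topology UNIV) (\<lambda>z. snd z i l m')"
    using continuous_map_compose[OF continuous_map_snd continuous_map_Xtop_coordinate[OF assms]]
    by (simp add: o_def)
  ultimately have "continuous_map (Xtop2 n) (prod_topology (discrete_topology UNIV) (discrete_topology UNIV))
      (\<lambda>z. (fst z i k m, snd z i l m'))"
    by (rule continuous_map_pairedI)
  then have "continuous_map (Xtop2 n) (discrete_topology UNIV) (\<lambda>z. (fst z i k m, snd z i l m'))"
    unfolding prod_topology_discrete_topology[symmetric] UNIV_Times_UNIV .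
  note preimage = openin_continuous_map_preimage[OF this] closedin_continuous_map_preimage[OF this]
  have "?E = {z \<in> topspace (Xtop2 n). (fst z i k m, snd z i l m') \<in> {(a, b). a = b}}"
    by auto
  then show ?thesis
    using preimage[of "{(a, b). a = b}"] by simp
qed

section \<open>The hereditary objects a^{x,l}_j\<close>

lemma range_eq_range_iff:
  "range f = range g \<longleftrightarrow> (\<forall>k. \<exists>l. f k = g l) \<and> (\<forall>l. \<exists>k. f k = g l)"
proof -
  have "range f \<subseteq> range g \<longleftrightarrow> (\<forall>k. \<exists>l. f k = g l)" "range g \<subseteq> range f \<longleftrightarrow> (\<forall>l. \<exists>k. f k = g l)"
    by (auto simp: image_subset_iff image_iff) (metis, metis)
  then show ?thesis
    by blast
qed

lemma image_Collect_eq_iff: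
  assumes "range f = range g"
    and "\<And>m. f m \<in> f ` Collect P \<Longrightarrow> P m" "\<And>m. g m \<in> g ` Collect Q \<Longrightarrow> Q m"
  shows "f ` Collect P = g ` Collect Q \<longleftrightarrow> (\<forall>m m'. f m = g m' \<longrightarrow> (P m \<longleftrightarrow> Q m'))"
proof
  assume "f ` Collect P = g ` Collect Q"
  then show "\<forall>m m'. f m = g m' \<longrightarrow> (P m \<longleftrightarrow> Q m')"
    using assms(2,3) by (metis image_eqI mem_Collect_eq)
next
  assume match: "\<forall>m m'. f m = g m' \<longrightarrow> (P m \<longleftrightarrow> Q m')"
  show "f ` Collect P = g ` Collect Q"
  proof (intro equalityI image_subsetI)
    fix m
    assume "m \<in> Collect P"
    moreover obtain m' where "f m = g m'"
      using assms(1) by (metis rangeE rangeI)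
    ultimately show "f m \<in> g ` Collect Q"
      using match by auto
  next
    fix m'
    assume "m' \<in> Collect Q"
    moreover obtain m where "f m = g m'"
      using assms(1) by (metis rangeE rangeI)
    ultimately show "g m' \<in> f ` Collect P"
      using match by (metis image_eqI mem_Collect_eq)
  qed
qed

text \<open>\<open>a_obj x 0 m\<close> is the point x(0)(m) of A^x_1 and \<open>a_obj x j m\<close> is a^{x,m}_j for
  j >= 1, so that A^x_{j+1} = \<open>range (a_obj x j)\<close> for all j.\<close>

definition a_obj :: "pt \<Rightarrow> nat \<Rightarrow> nat \<Rightarrow> hobj" where
  "a_obj x j m = (if j = 0 then Leaf (x 0 m) else small_a x j m)"

lemma a_obj_0 [simp]: "a_obj x 0 m = Leaf (x 0 m)"
  by (simp add: a_obj_def)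

lemma a_obj_Suc: "a_obj x (Suc j) l = Node (acset (a_obj x j ` {k. x (Suc j) l k}))"
  by (cases j) (simp_all add: a_obj_def)

lemma big_A_Suc: "big_A x (Suc j) = range (a_obj x j)"
  by (cases j) (auto simp: a_obj_def)

lemma a_obj_Suc_eq_iff:
  "a_obj x (Suc j) l = a_obj y (Suc j) l' \<longleftrightarrow>
    a_obj x j ` {k. x (Suc j) l k} = a_obj y j ` {k. y (Suc j) l' k}"
proof -
  have "f ` A \<in> {A. countable A}" for f :: "nat \<Rightarrow> hobj" and A
    by simp
  then show ?thesis
    unfolding a_obj_Suc by (simp add: acset_inject)
qed

lemma Xset_SucD:
  assumes "x \<in> Xset n" "Suc j < n"
  shows "\<forall>m. \<exists>k. x (Suc j) k m"
    and "\<forall>k l1 l2. x j l1 = x j l2 \<longrightarrow> x (Suc j) k l1 = x (Suc j) k l2"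
proof -
  have levels: "\<forall>i. 1 \<le> i \<and> i < n \<longrightarrow> (\<forall>m. \<exists>k. x i k m) \<and> (\<forall>k. \<exists>m. x i k m) \<and>
      (\<forall>k l1 l2. x (i - 1) l1 = x (i - 1) l2 \<longrightarrow> x i k l1 = x i k l2)"
    using assms(1) unfolding Xset_def mem_Collect_eq by (rule conjunct2)
  have "(\<forall>m. \<exists>k. x (Suc j) k m) \<and> (\<forall>k. \<exists>m. x (Suc j) k m) \<and>
      (\<forall>k l1 l2. x (Suc j - 1) l1 = x (Suc j - 1) l2 \<longrightarrow> x (Suc j) k l1 = x (Suc j) k l2)"
    using assms(2) by (intro levels[THEN spec[of _ "Suc j"], THEN mp]) simp
  then show "\<forall>m. \<exists>k. x (Suc j) k m"
    and "\<forall>k l1 l2. x j l1 = x j l2 \<longrightarrow> x (Suc j) k l1 = x (Suc j) k l2"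
    unfolding diff_Suc_1 by blast+
qed

lemma a_obj_eq_iff:
  assumes "x \<in> Xset n" "j < n"
  shows "a_obj x j l1 = a_obj x j l2 \<longleftrightarrow> x j l1 = x j l2"
  using assms(2)
proof (induction j arbitrary: l1 l2)
  case 0
  then show ?case by simp
next
  case (Suc j)
  have contained: "x (Suc j) l' m"
    if images: "a_obj x j ` {k. x (Suc j) l k} = a_obj x j ` {k. x (Suc j) l' k}"
      and "x (Suc j) l m" for l l' m
  proof -
    have "a_obj x j m \<in> a_obj x j ` {k. x (Suc j) l' k}"
      using images \<open>x (Suc j) l m\<close> by blast
    then obtain m' where m': "x (Suc j) l' m'" "a_obj x j m' = a_obj x j m"
      by auto
    then have "x j m' = x j m"
      using Suc.IH[OF Suc_lessD[OF Suc.prems]] by blast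
    then show ?thesis
      using Xset_SucD(2)[OF assms(1) Suc.prems] m'(1) by metis
  qed
  show ?case
  proof
    assume "a_obj x (Suc j) l1 = a_obj x (Suc j) l2"
    then have eq: "a_obj x j ` {k. x (Suc j) l1 k} = a_obj x j ` {k. x (Suc j) l2 k}"
      by (simp add: a_obj_Suc_eq_iff)
    show "x (Suc j) l1 = x (Suc j) l2"
      using contained[OF eq] contained[OF eq[symmetric]] by blast
  qed (simp add: a_obj_Suc)
qed

lemma a_obj_mem_image_iff:
  assumes "x \<in> Xset n" "Suc j < n"
  shows "a_obj x j m \<in> a_obj x j ` {k. x (Suc j) l k} \<longleftrightarrow> x (Suc j) l m"
proof
  assume "a_obj x j m \<in> a_obj x j ` {k. x (Suc j) l k}"
  then obtain m' where m': "x (Suc j) l m'" "a_obj x j m' = a_obj x j m"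
    by auto
  then have "x j m' = x j m"
    using a_obj_eq_iff[OF assms(1) Suc_lessD[OF assms(2)]] by blast
  then show "x (Suc j) l m"
    using Xset_SucD(2)[OF assms] m'(1) by metis
qed simp

lemma range_a_obj_eq_descend:
  assumes "x \<in> Xset n" "y \<in> Xset n" "Suc j < n"
    and "range (a_obj x (Suc j)) = range (a_obj y (Suc j))"
  shows "range (a_obj x j) = range (a_obj y j)"
proof -
  have "range (a_obj x j) \<subseteq> range (a_obj y j)"
    if x: "x \<in> Xset n" and ranges: "range (a_obj x (Suc j)) = range (a_obj y (Suc j))" for x y
  proof
    fix w
    assume "w \<in> range (a_obj x j)"
    then obtain m where m: "w = a_obj x j m"
      by auto
    obtain k where k: "x (Suc j) k m"
      using Xset_SucD(1)[OF x assms(3)] by blast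
    obtain k' where "a_obj x (Suc j) k = a_obj y (Suc j) k'"
      using ranges by (metis rangeE rangeI)
    then have "a_obj x j ` {m. x (Suc j) k m} = a_obj y j ` {m. y (Suc j) k' m}"
      by (simp add: a_obj_Suc_eq_iff)
    then show "w \<in> range (a_obj y j)"
      using m k by blast
  qed
  from this[OF assms(1,4)] this[OF assms(2) assms(4)[symmetric]] show ?thesis
    by (rule subset_antisym)
qed

lemma range_a_obj_eq_below:
  assumes "x \<in> Xset n" "y \<in> Xset n" "j \<le> M" "M < n"
    and "range (a_obj x M) = range (a_obj y M)"
  shows "range (a_obj x j) = range (a_obj y j)"
  using assms(3,5)
proof (induction j rule: inc_induct)
  case (step j)
  then show ?case
    using range_a_obj_eq_descend[OF assms(1,2)] assms(4) by simp
qed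

text \<open>\<open>a_match x y j k l\<close> expresses a^{x,k}_j = a^{y,l}_j only when the lower levels of x
  and y have equal ranges (\<open>a_match_iff\<close>), but unlike equality of hereditary sets it is
  visibly of low Borel rank.\<close>

fun a_match :: "pt \<Rightarrow> pt \<Rightarrow> nat \<Rightarrow> nat \<Rightarrow> nat \<Rightarrow> bool" where
  "a_match x y 0 k l \<longleftrightarrow> x 0 k = y 0 l"
| "a_match x y (Suc j) k l \<longleftrightarrow>
    (\<forall>m m'. a_match x y j m m' \<longrightarrow> (x (Suc j) k m \<longleftrightarrow> y (Suc j) l m'))"

definition ranges_match :: "pt \<Rightarrow> pt \<Rightarrow> nat \<Rightarrow> bool" where
  "ranges_match x y j \<longleftrightarrow> (\<forall>k. \<exists>l. a_match x y j k l) \<and> (\<forall>l. \<exists>k. a_match x y j k l)"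

lemma a_match_iff:
  assumes "x \<in> Xset n" "y \<in> Xset n" "j < n"
    and "\<forall>i<j. range (a_obj x i) = range (a_obj y i)"
  shows "a_match x y j k l \<longleftrightarrow> a_obj x j k = a_obj y j l"
  using assms(3,4)
proof (induction j arbitrary: k l)
  case 0
  then show ?case by simp
next
  case (Suc j)
  have "a_match x y (Suc j) k l \<longleftrightarrow>
      (\<forall>m m'. a_obj x j m = a_obj y j m' \<longrightarrow> (x (Suc j) k m \<longleftrightarrow> y (Suc j) l m'))"
    using Suc by simp
  also have "\<dots> \<longleftrightarrow> a_obj x j ` {m. x (Suc j) k m} = a_obj y j ` {m. y (Suc j) l m}"
    using Suc.prems a_obj_mem_image_iff[OF assms(1) Suc.prems(1)]
      a_obj_mem_image_iff[OF assms(2) Suc.prems(1)]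
    by (intro image_Collect_eq_iff[symmetric]) auto
  also have "\<dots> \<longleftrightarrow> a_obj x (Suc j) k = a_obj y (Suc j) l"
    by (simp add: a_obj_Suc_eq_iff)
  finally show ?case .
qed

lemma ranges_match_iff:
  assumes "x \<in> Xset n" "y \<in> Xset n" "j < n"
    and "\<forall>i<j. range (a_obj x i) = range (a_obj y i)"
  shows "ranges_match x y j \<longleftrightarrow> range (a_obj x j) = range (a_obj y j)"
  unfolding ranges_match_def a_match_iff[OF assms] range_eq_range_iff ..

lemma ranges_match_upto_iff:
  assumes "x \<in> Xset n" "y \<in> Xset n" "M < n"
  shows "(\<forall>j\<le>M. ranges_match x y j) \<longleftrightarrow> (\<forall>j\<le>M. range (a_obj x j) = range (a_obj y j))"
  using assms(3)
proof (induction M)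
  case 0
  then show ?case
    using ranges_match_iff[OF assms(1,2) 0] by simp
next
  case (Suc M)
  have split: "(\<forall>j\<le>Suc M. P j) \<longleftrightarrow> (\<forall>j\<le>M. P j) \<and> P (Suc M)" for P :: "nat \<Rightarrow> bool"
    by (auto simp: le_Suc_eq)
  have "ranges_match x y (Suc M) \<longleftrightarrow> range (a_obj x (Suc M)) = range (a_obj y (Suc M))"
    if "\<forall>j\<le>M. range (a_obj x j) = range (a_obj y j)"
    using ranges_match_iff[OF assms(1,2) Suc.prems] that by (simp add: less_Suc_eq_le)
  then show ?case
    unfolding split using Suc.IH[OF Suc_lessD[OF Suc.prems]] by blast
qed

lemma F_rel_Suc:
  "F_rel (Suc N) =
    {(x, y). x \<in> Xset (Suc N) \<and> y \<in> Xset (Suc N) \<and> (\<forall>j\<le>N. ranges_match x y j)}"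
proof -
  have "range (a_obj x N) = range (a_obj y N) \<longleftrightarrow> (\<forall>j\<le>N. ranges_match x y j)"
    if "x \<in> Xset (Suc N)" "y \<in> Xset (Suc N)" for x y
  proof -
    have "(\<forall>j\<le>N. ranges_match x y j) \<longleftrightarrow> (\<forall>j\<le>N. range (a_obj x j) = range (a_obj y j))"
      by (rule ranges_match_upto_iff[OF that lessI])
    also have "\<dots> \<longleftrightarrow> range (a_obj x N) = range (a_obj y N)"
      using range_a_obj_eq_below[OF that _ lessI] by blast
    finally show ?thesis ..
  qed
  then show ?thesis
    unfolding F_rel_def big_A_Suc by blast
qed

section \<open>The Borel rank of F_n\<close>

lemma a_match_set_in_borel_Pi:
  assumes "j < n" "j < q"
  shows "{(x, y). x \<in> Xset n \<and> y \<in> Xset n \<and> a_match x y j k l} \<in> borel_Pi (Xtop2 n) q"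
  using assms
proof (induction j arbitrary: k l q)
  case 0
  then obtain q' where q: "q = Suc q'"
    by (cases q) auto
  have "{(x, y). x \<in> Xset n \<and> y \<in> Xset n \<and> a_match x y 0 k l} =
      (\<Inter>m. {(x, y). x \<in> Xset n \<and> y \<in> Xset n \<and> x 0 k m = y 0 l m})"
    by (auto simp: fun_eq_iff)
  moreover have "(\<Inter>m. {(x, y). x \<in> Xset n \<and> y \<in> Xset n \<and> x 0 k m = y 0 l m}) \<in> borel_Pi (Xtop2 n) q"
    unfolding q by (rule INT_clopen_in_borel_Pi) (use clopen_coordinate_eq 0 in blast)
  ultimately show ?case
    by simp
next
  case (Suc j)
  define q' where "q' = q - 2"
  have q: "q = Suc (Suc q')" and "j < Suc q'"
    using Suc.prems(2) by (simp_all add: q'_def)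
  let ?S = "\<lambda>m m'. {(x, y). x \<in> Xset n \<and> y \<in> Xset n \<and> a_match x y j m m'}"
  let ?E = "\<lambda>m m'. {(x, y). x \<in> Xset n \<and> y \<in> Xset n \<and> x (Suc j) k m = y (Suc j) l m'}"
  have "{(x, y). x \<in> Xset n \<and> y \<in> Xset n \<and> a_match x y (Suc j) k l} =
      (\<Inter>m. \<Inter>m'. (Xset n \<times> Xset n - ?S m m') \<union> ?E m m')"
    by auto
  moreover have "(Xset n \<times> Xset n - ?S m m') \<union> ?E m m' \<in> borel_Sigma (Xtop2 n) (Suc q')" for m m'
  proof (rule borel_Sigma_Un)
    show "Xset n \<times> Xset n - ?S m m' \<in> borel_Sigma (Xtop2 n) (Suc q')"
      using Suc.IH[of "Suc q'" m m'] Suc.prems \<open>j < Suc q'\<close> by (simp add: borel_Pi_iff)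
    show "?E m m' \<in> borel_Sigma (Xtop2 n) (Suc q')"
      using clopen_coordinate_eq[OF Suc.prems(1)] clopen_in_borel_Sigma_Pi by blast
  qed
  ultimately show ?case
    unfolding q by (simp add: borel_Pi_INT borel_Pi_INT_Sigma)
qed

lemma ranges_match_set_in_borel_Pi:
  assumes "j < n" "j < q"
  shows "{(x, y). x \<in> Xset n \<and> y \<in> Xset n \<and> ranges_match x y j} \<in> borel_Pi (Xtop2 n) (Suc (Suc q))"
proof -
  obtain q' where q: "q = Suc q'"
    using assms(2) by (cases q) auto
  let ?S = "\<lambda>k l. {(x, y). x \<in> Xset n \<and> y \<in> Xset n \<and> a_match x y j k l}"
  have S: "?S k l \<in> borel_Pi (Xtop2 n) (Suc q')" for k l
    using a_match_set_in_borel_Pi assms q by simp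
  have "{(x, y). x \<in> Xset n \<and> y \<in> Xset n \<and> ranges_match x y j} =
      (\<Inter>k. \<Union>l. ?S k l) \<inter> (\<Inter>l. \<Union>k. ?S k l)"
    unfolding ranges_match_def by blast
  moreover have "(\<Inter>k. \<Union>l. ?S k l) \<in> borel_Pi (Xtop2 n) (Suc (Suc q))"
    unfolding q by (intro borel_Pi_INT_Sigma borel_Sigma_UN_Pi S)
  moreover have "(\<Inter>l. \<Union>k. ?S k l) \<in> borel_Pi (Xtop2 n) (Suc (Suc q))"
    unfolding q by (intro borel_Pi_INT_Sigma borel_Sigma_UN_Pi S)
  ultimately show ?thesis
    by (simp add: borel_Pi_Int)
qed

theorem proposition1p16:
  fixes n :: nat
  assumes "1 \<le> n"
  shows "F_rel n \<in> borel_Pi (prod_topology (Xtop n) (Xtop n)) (2 + n)"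
proof -
  obtain N where n: "n = Suc N"
    using assms by (cases n) auto
  \<comment> \<open>\<open>min j N\<close> turns the finite intersection over \<open>j \<le> N\<close> into a countable one.\<close>
  have "F_rel n = (\<Inter>j. {(x, y). x \<in> Xset n \<and> y \<in> Xset n \<and> ranges_match x y (min j N)})"
    unfolding n F_rel_Suc by (auto simp: min_def) (metis le_refl)
  moreover have "(\<Inter>j. {(x, y). x \<in> Xset n \<and> y \<in> Xset n \<and> ranges_match x y (min j N)})
      \<in> borel_Pi (Xtop2 n) (Suc (Suc n))"
    using n by (intro borel_Pi_INT ranges_match_set_in_borel_Pi) auto
  ultimately show ?thesis
    by (simp add: numeral_2_eq_2)
qed

end
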